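(* Let $M$ be a countable LA-structure which is a model of $\forall_1$-$Th(\mathbb{N})$ (the set of all universal LA-sentences true in $\mathbb{N}$). Then $M$ can be embedded (as an LA-structure) into the reduced power $\mathbb{N}^{\omega}/\mathcal{F}$, where $\mathcal{F}$ is the cofinite filter on $\omega$.
   Context: LA is the first-order language with non-logical symbols $+,\cdot,0,1,\leq$; $\mathbb{N}$ is the standard LA-structure. The reduced power $\mathbb{N}^\omega/\mathcal{F}$ has as elements the classes of functions $f:\omega\to\mathbb{N}$ modulo agreement on a cofinite set, with $+,\cdot$ defined pointwise, $0,1$ the classes of constant functions, and $[f]\le[g]$ iff $f(n)\le g(n)$ for all but finitely many $n$. An embedding is an injective map preserving $0,1,+,\cdot$ and $\leq$. *)

theory Defs
  imports Main "HOL-Library.Countable_Set"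
begin

datatype tm = Var nat | Zero | One | Plus tm tm | Times tm tm

datatype fm = FFalse | Eq tm tm | Le tm tm | Neg fm | Conj fm fm | Disj fm fm
  | Impl fm fm | All nat fm | Ex nat fm

fun fv_tm :: "tm \<Rightarrow> nat set" where
  "fv_tm (Var i) = {i}"
| "fv_tm Zero = {}"
| "fv_tm One = {}"
| "fv_tm (Plus s t) = fv_tm s \<union> fv_tm t"
| "fv_tm (Times s t) = fv_tm s \<union> fv_tm t"

fun fv :: "fm \<Rightarrow> nat set" where
  "fv FFalse = {}"
| "fv (Eq s t) = fv_tm s \<union> fv_tm t"
| "fv (Le s t) = fv_tm s \<union> fv_tm t"
| "fv (Neg p) = fv p"
| "fv (Conj p q) = fv p \<union> fv q"
| "fv (Disj p q) = fv p \<union> fv q"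
| "fv (Impl p q) = fv p \<union> fv q"
| "fv (All i p) = fv p - {i}"
| "fv (Ex i p) = fv p - {i}"

definition sentence :: "fm \<Rightarrow> bool" where
  "sentence p \<longleftrightarrow> fv p = {}"

fun qfree :: "fm \<Rightarrow> bool" where
  "qfree (All i p) = False"
| "qfree (Ex i p) = False"
| "qfree (Neg p) = qfree p"
| "qfree (Conj p q) = (qfree p \<and> qfree q)"
| "qfree (Disj p q) = (qfree p \<and> qfree q)"
| "qfree (Impl p q) = (qfree p \<and> qfree q)"
| "qfree _ = True"

fun universal :: "fm \<Rightarrow> bool" where
  "universal (All i p) = universal p"
| "universal p = qfree p"

record 'a la_struct =
  dom :: "'a set"
  zer :: 'a
  one :: 'a
  pl :: "'a \<Rightarrow> 'a \<Rightarrow> 'a"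
  tms :: "'a \<Rightarrow> 'a \<Rightarrow> 'a"
  leq :: "'a \<Rightarrow> 'a \<Rightarrow> bool"

definition la_structure :: "'a la_struct \<Rightarrow> bool" where
  "la_structure M \<longleftrightarrow> zer M \<in> dom M \<and> one M \<in> dom M \<and>
     (\<forall>x\<in>dom M. \<forall>y\<in>dom M. pl M x y \<in> dom M \<and> tms M x y \<in> dom M)"

fun eval :: "'a la_struct \<Rightarrow> (nat \<Rightarrow> 'a) \<Rightarrow> tm \<Rightarrow> 'a" where
  "eval M e (Var i) = e i"
| "eval M e Zero = zer M"
| "eval M e One = one M"
| "eval M e (Plus s t) = pl M (eval M e s) (eval M e t)"
| "eval M e (Times s t) = tms M (eval M e s) (eval M e t)"

fun sat :: "'a la_struct \<Rightarrow> (nat \<Rightarrow> 'a) \<Rightarrow> fm \<Rightarrow> bool" where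
  "sat M e FFalse = False"
| "sat M e (Eq s t) = (eval M e s = eval M e t)"
| "sat M e (Le s t) = leq M (eval M e s) (eval M e t)"
| "sat M e (Neg p) = (\<not> sat M e p)"
| "sat M e (Conj p q) = (sat M e p \<and> sat M e q)"
| "sat M e (Disj p q) = (sat M e p \<or> sat M e q)"
| "sat M e (Impl p q) = (sat M e p \<longrightarrow> sat M e q)"
| "sat M e (All i p) = (\<forall>a\<in>dom M. sat M (e(i := a)) p)"
| "sat M e (Ex i p) = (\<exists>a\<in>dom M. sat M (e(i := a)) p)"

definition models :: "'a la_struct \<Rightarrow> fm \<Rightarrow> bool" where
  "models M p \<longleftrightarrow> (\<forall>e. (\<forall>i. e i \<in> dom M) \<longrightarrow> sat M e p)"

definition stdN :: "nat la_struct" where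
  "stdN = \<lparr>dom = UNIV, zer = 0, one = 1, pl = (+), tms = (*), leq = (\<le>)\<rparr>"

definition univ_Th_N :: "fm set" where
  "univ_Th_N = {p. sentence p \<and> universal p \<and> models stdN p}"

text \<open>An embedding of M into N^omega/F is given by a choice of representatives
  h x :: nat => nat for each x in the domain; [f] = [g] iff f, g agree cofinitely,
  operations pointwise, and [f] <= [g] iff f n <= g n for cofinitely many n.\<close>
definition embeds_into_reduced_power :: "'a la_struct \<Rightarrow> ('a \<Rightarrow> nat \<Rightarrow> nat) \<Rightarrow> bool" where
  "embeds_into_reduced_power M h \<longleftrightarrow>
     (\<forall>x\<in>dom M. \<forall>y\<in>dom M. (\<forall>\<^sub>F n in cofinite. h x n = h y n) \<longleftrightarrow> x = y) \<and>
     (\<forall>\<^sub>F n in cofinite. h (zer M) n = 0) \<and>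
     (\<forall>\<^sub>F n in cofinite. h (one M) n = 1) \<and>
     (\<forall>x\<in>dom M. \<forall>y\<in>dom M. \<forall>\<^sub>F n in cofinite. h (pl M x y) n = h x n + h y n) \<and>
     (\<forall>x\<in>dom M. \<forall>y\<in>dom M. \<forall>\<^sub>F n in cofinite. h (tms M x y) n = h x n * h y n) \<and>
     (\<forall>x\<in>dom M. \<forall>y\<in>dom M. leq M x y \<longleftrightarrow> (\<forall>\<^sub>F n in cofinite. h x n \<le> h y n))"

end

theory Submission
  imports Defs
begin

text \<open>Enumerate the countable model as \<open>a\<^sub>0, a\<^sub>1, \<dots>\<close> and the quantifier-free formulas as
  \<open>\<phi>\<^sub>0, \<phi>\<^sub>1, \<dots>\<close>. For each \<open>n\<close>, the conjunction of \<open>\<phi>\<^sub>0, \<dots>, \<phi>\<^sub>n\<close>, each negated if it is false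
  of the \<open>a\<^sub>i\<close> in \<open>M\<close>, is satisfiable in \<open>\<nat>\<close>, say by \<open>b\<^sub>n\<close>: otherwise the universal closure
  of its negation is a universal sentence true in \<open>\<nat>\<close> but false in \<open>M\<close>. Every quantifier-free
  fact about the \<open>a\<^sub>i\<close> then holds of the \<open>b\<^sub>n\<close> for all large \<open>n\<close>, so
  \<open>a\<^sub>i \<mapsto> [n \<mapsto> b\<^sub>n(i)]\<close> is an embedding into the reduced power.\<close>

instance tm :: countable by countable_datatype
instance fm :: countable by countable_datatype

fun Alls :: "nat list \<Rightarrow> fm \<Rightarrow> fm" where
  "Alls [] p = p"
| "Alls (i # is) p = All i (Alls is p)"

fun Conjs :: "fm list \<Rightarrow> fm" where
  "Conjs [] = Neg FFalse"
| "Conjs (p # ps) = Conj p (Conjs ps)"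

lemma fv_Alls [simp]: "fv (Alls vs p) = fv p - set vs"
  by (induction vs) auto

lemma universal_Alls: "qfree p \<Longrightarrow> universal (Alls vs p)"
proof (induction vs)
  case Nil
  then show ?case by (cases p) auto
qed simp

lemma models_Alls [simp]: "models X (Alls vs p) \<longleftrightarrow> models X p"
proof
  show "models X p" if "models X (Alls vs p)"
    using that unfolding models_def
  proof (induction vs)
    case (Cons i vs)
    have "sat X e (Alls vs p)" if "\<forall>i. e i \<in> dom X" for e
      using Cons.prems that by (metis Alls.simps(2) sat.simps(8) fun_upd_triv)
    then show ?case using Cons.IH by blast
  qed simp
  show "models X (Alls vs p)" if "models X p"
    using that unfolding models_def by (induction vs) auto
qed

lemma sat_Conjs [simp]: "sat X e (Conjs ps) \<longleftrightarrow> (\<forall>p\<in>set ps. sat X e p)"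
  by (induction ps) auto

lemma qfree_Conjs [simp]: "qfree (Conjs ps) \<longleftrightarrow> (\<forall>p\<in>set ps. qfree p)"
  by (induction ps) auto

lemma finite_fv_tm [simp]: "finite (fv_tm t)"
  by (induction t) auto

lemma finite_fv [simp]: "finite (fv p)"
  by (induction p) auto

lemma finite_qfree_type_realized_in_stdN:
  assumes M_univ: "\<forall>p\<in>univ_Th_N. models M p"
    and e: "\<forall>i. e i \<in> dom M"
    and "finite P" and "\<forall>p\<in>P. qfree p"
  shows "\<exists>b. \<forall>p\<in>P. sat stdN b p \<longleftrightarrow> sat M e p"
proof -
  obtain ps where ps: "set ps = P"
    using \<open>finite P\<close> finite_list by blast
  define q where "q = Conjs (map (\<lambda>p. if sat M e p then p else Neg p) ps)"
  have q_M: "sat M e q" and q_qfree: "qfree q"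
    using ps \<open>\<forall>p\<in>P. qfree p\<close> by (auto simp: q_def)
  obtain vs where vs: "set vs = fv q"
    using finite_fv finite_list by blast
  have "\<exists>b. sat stdN b q"
  proof (rule ccontr)
    assume "\<nexists>b. sat stdN b q"
    then have "models stdN (Neg q)"
      by (simp add: models_def)
    then have "Alls vs (Neg q) \<in> univ_Th_N"
      using vs q_qfree universal_Alls[of "Neg q"] by (simp add: univ_Th_N_def sentence_def)
    then have "models M (Neg q)"
      using M_univ by auto
    then show False
      using e q_M by (auto simp: models_def)
  qed
  then obtain b where "sat stdN b q" ..
  then have "\<forall>p\<in>P. sat stdN b (if sat M e p then p else Neg p)"
    using ps by (simp add: q_def)
  then have "\<forall>p\<in>P. sat stdN b p \<longleftrightarrow> sat M e p"
    by (metis sat.simps(4))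
  then show ?thesis by blast
qed

lemma qfree_diagram_approximated_in_stdN:
  assumes "\<forall>p\<in>univ_Th_N. models M p" and "\<forall>i. e i \<in> dom M"
  obtains B :: "nat \<Rightarrow> nat \<Rightarrow> nat"
  where "\<And>p. qfree p \<Longrightarrow> \<forall>\<^sub>F n in cofinite. sat stdN (B n) p \<longleftrightarrow> sat M e p"
proof
  define P where "P n = from_nat ` {..n} \<inter> {p. qfree p}" for n
  define B where "B n = (SOME b. \<forall>p\<in>P n. sat stdN b p \<longleftrightarrow> sat M e p)" for n
  have B: "\<forall>p\<in>P n. sat stdN (B n) p \<longleftrightarrow> sat M e p" for n
  proof -
    have "\<exists>b. \<forall>p\<in>P n. sat stdN b p \<longleftrightarrow> sat M e p"
      by (rule finite_qfree_type_realized_in_stdN) (use assms in \<open>auto simp: P_def\<close>)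
    then show ?thesis
      unfolding B_def by (rule someI_ex)
  qed
  fix p :: fm
  assume "qfree p"
  then have "p \<in> P n" if "n \<ge> to_nat p" for n
    using that unfolding P_def by (metis IntI atMost_iff from_nat_to_nat image_eqI mem_Collect_eq)
  then show "\<forall>\<^sub>F n in cofinite. sat stdN (B n) p \<longleftrightarrow> sat M e p"
    using B unfolding cofinite_eq_sequentially eventually_sequentially by blast
qed

lemma embeds_into_reduced_power_if_approximated:
  assumes "la_structure M"
    and enum: "\<And>x. x \<in> dom M \<Longrightarrow> e (idx x) = x"
    and approx: "\<And>p. qfree p \<Longrightarrow> \<forall>\<^sub>F n in cofinite. sat stdN (B n) p \<longleftrightarrow> sat M e p"
  shows "embeds_into_reduced_power M (\<lambda>x n. B n (idx x))"
proof -
  have limit: "(\<forall>\<^sub>F n in cofinite. sat stdN (B n) p) \<longleftrightarrow> sat M e p" if "qfree p" for p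
    using eventually_subst[OF approx[OF that]] by simp
  have closed: "zer M \<in> dom M" "one M \<in> dom M"
      "\<And>x y. x \<in> dom M \<Longrightarrow> y \<in> dom M \<Longrightarrow> pl M x y \<in> dom M \<and> tms M x y \<in> dom M"
    using \<open>la_structure M\<close> unfolding la_structure_def by auto
  show ?thesis
    unfolding embeds_into_reduced_power_def
    using limit[of "Eq (Var (idx _)) (Var (idx _))"] limit[of "Le (Var (idx _)) (Var (idx _))"]
      limit[of "Eq (Var (idx (zer M))) Zero"] limit[of "Eq (Var (idx (one M))) One"]
      limit[of "Eq (Var (idx (pl M _ _))) (Plus (Var (idx _)) (Var (idx _)))"]
      limit[of "Eq (Var (idx (tms M _ _))) (Times (Var (idx _)) (Var (idx _)))"]
    by (simp add: stdN_def enum closed)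
qed

theorem mainTheorem3:
  fixes M :: "'a la_struct"
  assumes "la_structure M"
    and "countable (dom M)"
    and "\<forall>p\<in>univ_Th_N. models M p"
  shows "\<exists>h. embeds_into_reduced_power M h"
proof -
  have "dom M \<noteq> {}"
    using \<open>la_structure M\<close> unfolding la_structure_def by auto
  then have "\<forall>i. from_nat_into (dom M) i \<in> dom M"
    by (simp add: from_nat_into)
  then obtain B :: "nat \<Rightarrow> nat \<Rightarrow> nat" where "\<And>p. qfree p \<Longrightarrow>
      \<forall>\<^sub>F n in cofinite. sat stdN (B n) p \<longleftrightarrow> sat M (from_nat_into (dom M)) p"
    using qfree_diagram_approximated_in_stdN \<open>\<forall>p\<in>univ_Th_N. models M p\<close> by blast
  then have "embeds_into_reduced_power M (\<lambda>x n. B n (to_nat_on (dom M) x))"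
    using embeds_into_reduced_power_if_approximated \<open>la_structure M\<close> \<open>countable (dom M)\<close>
    by (metis from_nat_into_to_nat_on)
  then show ?thesis by blast
qed

end
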